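(* For all $n\geq 1$ and $m\geq 2$, \[2\bar{a}_m(n)=\bar{a}_{m-1}(2n,n).\]
   Context: An overpartition of $n$ is a partition of $n$ in which the first occurrence of each distinct part value may be overlined; an overlined part and a non-overlined part of the same value count as equal. $\bar{a}_m(n)$ is the number of overpartitions of $n$ in which the smallest part value occurs at least $m$ times, and $\bar{a}_m(N,\ell)$ is the number of overpartitions of $N$ in which the smallest part value occurs at least $m$ times and the largest part minus the smallest part equals $\ell$. *)

theory Defs
  imports Main "HOL-Library.Multiset"
begin

text \<open>An overpartition of n is represented as a pair (M, V): M is the multiset of
  part values (all positive, summing to n), and V is the set of part values whose
  first occurrence is overlined (V is a subset of the distinct part values).\<close>

definition overpartitions :: "nat \<Rightarrow> (nat multiset \<times> nat set) set" where
  "overpartitions n = {(M, V). (\<forall>x\<in>#M. 0 < x) \<and> sum_mset M = n \<and> V \<subseteq> set_mset M}"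

definition abar :: "nat \<Rightarrow> nat \<Rightarrow> nat" where
  "abar m n = card {(M, V) \<in> overpartitions n.
       M \<noteq> {#} \<and> m \<le> count M (Min (set_mset M))}"

definition abar2 :: "nat \<Rightarrow> nat \<Rightarrow> nat \<Rightarrow> nat" where
  "abar2 m N l = card {(M, V) \<in> overpartitions N.
       M \<noteq> {#} \<and> m \<le> count M (Min (set_mset M)) \<and>
       Max (set_mset M) - Min (set_mset M) = l}"

end

theory Submission
  imports Defs
begin

text \<open>Take an overpartition of \<open>n\<close> whose smallest part \<open>s\<close> occurs at least \<open>m \<ge> 2\<close> times and
  replace one copy of \<open>s\<close> by \<open>s + n\<close>, overlined or not. Since every part is at most \<open>n\<close>, the new
  part is the unique largest one, the smallest part is still \<open>s\<close> (now with multiplicity at least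
  \<open>m - 1\<close>), and the result is an overpartition of \<open>2n\<close> with largest minus smallest part \<open>n\<close>.
  Conversely, in such an overpartition of \<open>2n\<close> the largest part \<open>s + n > n\<close> occurs only once, so
  turning it back into \<open>s\<close> (and recording whether it was overlined) inverts the map. Hence the
  second set is in bijection with two copies of the first.\<close>

lemma mem_le_sum_mset:
  fixes M :: "'a :: canonically_ordered_monoid_add multiset"
  shows "x \<in># M \<Longrightarrow> x \<le> sum_mset M"
  by (metis le_iff_add sum_mset.remove)

definition overpartitions_min_count :: "nat \<Rightarrow> nat \<Rightarrow> (nat multiset \<times> nat set) set" where
  "overpartitions_min_count m n =
     {(M, V) \<in> overpartitions n. M \<noteq> {#} \<and> m \<le> count M (Min_mset M)}"

definition overpartitions_min_count_spread ::
    "nat \<Rightarrow> nat \<Rightarrow> nat \<Rightarrow> (nat multiset \<times> nat set) set" where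
  "overpartitions_min_count_spread m N l =
     {(M, V) \<in> overpartitions_min_count m N. Max_mset M - Min_mset M = l}"

lemma abar_eq_card: "abar m n = card (overpartitions_min_count m n)"
  by (simp add: abar_def overpartitions_min_count_def)

lemma abar2_eq_card: "abar2 m N l = card (overpartitions_min_count_spread m N l)"
  unfolding abar2_def overpartitions_min_count_spread_def overpartitions_min_count_def
  by (rule arg_cong[where f = card]) auto

definition raise_smallest ::
    "nat \<Rightarrow> (nat multiset \<times> nat set) \<times> bool \<Rightarrow> nat multiset \<times> nat set" where
  "raise_smallest n = (\<lambda>((M, V), b).
     let s = Min_mset M
      in (add_mset (s + n) (M - {#s#}), if b then insert (s + n) V else V))"

definition lower_largest :: "nat multiset \<times> nat set \<Rightarrow> (nat multiset \<times> nat set) \<times> bool" where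
  "lower_largest = (\<lambda>(M, V).
     let s = Min_mset M; L = Max_mset M
      in ((add_mset s (M - {#L#}), V - {L}), L \<in> V))"

lemma raise_smallest_mem_and_inverse:
  assumes "1 \<le> n" "2 \<le> m" and p: "(M, V) \<in> overpartitions_min_count m n"
  shows "raise_smallest n ((M, V), b) \<in> overpartitions_min_count_spread (m - 1) (2 * n) n"
    and "lower_largest (raise_smallest n ((M, V), b)) = ((M, V), b)"
proof -
  define s where "s = Min_mset M"
  define R where "R = M - {#s#}"
  define V' where "V' = (if b then insert (s + n) V else V)"
  from p have pos: "\<forall>x\<in>#M. 0 < x" and sum: "sum_mset M = n" and "V \<subseteq> set_mset M"
      and "M \<noteq> {#}" and cnt: "m \<le> count M s"
    by (auto simp: overpartitions_min_count_def overpartitions_def s_def)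
  then have "s \<in># M" by (simp add: s_def)
  then have M: "M = add_mset s R" by (simp add: R_def)
  have "s \<in># R" using cnt \<open>2 \<le> m\<close> by (simp add: R_def in_diff_count)
  then have set_R: "set_mset R = set_mset M" unfolding R_def by (rule more_than_one_mset_mset_diff)
  have ge_s: "s \<le> x" if "x \<in># M" for x using that by (simp add: s_def)
  have le_n: "x \<le> n" if "x \<in># M" for x using that sum mem_le_sum_mset by blast
  have "0 < s" using pos \<open>s \<in># M\<close> by blast
  then have "s + n \<notin># M" using le_n by fastforce
  then have "s + n \<notin> V" using \<open>V \<subseteq> set_mset M\<close> by blast
  have raise: "raise_smallest n ((M, V), b) = (add_mset (s + n) R, V')"
    by (simp add: raise_smallest_def Let_def s_def R_def V'_def)
  have min: "Min_mset (add_mset (s + n) R) = s"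
    using \<open>s \<in># R\<close> ge_s by (intro Min_eqI) (auto simp: set_R)
  have max: "Max_mset (add_mset (s + n) R) = s + n"
    by (intro Max_eqI) (auto simp: set_R dest: le_n)
  have "sum_mset (add_mset (s + n) R) = 2 * n"
    using sum le_n[OF \<open>s \<in># M\<close>] by (simp add: M)
  moreover have "count (add_mset (s + n) R) s = count M s - 1"
    using \<open>1 \<le> n\<close> by (simp add: M)
  ultimately show "raise_smallest n ((M, V), b) \<in> overpartitions_min_count_spread (m - 1) (2 * n) n"
    using pos cnt min max \<open>V \<subseteq> set_mset M\<close> \<open>0 < s\<close>
    by (auto simp: raise V'_def set_R overpartitions_min_count_spread_def
        overpartitions_min_count_def overpartitions_def)
  show "lower_largest (raise_smallest n ((M, V), b)) = ((M, V), b)"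
    unfolding raise using min max \<open>s + n \<notin> V\<close> by (simp add: lower_largest_def Let_def M V'_def)
qed

lemma lower_largest_mem_and_inverse:
  assumes "1 \<le> n" "2 \<le> m" and p: "(M, V) \<in> overpartitions_min_count_spread (m - 1) (2 * n) n"
  shows "lower_largest (M, V) \<in> overpartitions_min_count m n \<times> UNIV"
    and "raise_smallest n (lower_largest (M, V)) = (M, V)"
proof -
  define s where "s = Min_mset M"
  define L where "L = Max_mset M"
  define R where "R = M - {#L#}"
  from p have pos: "\<forall>x\<in>#M. 0 < x" and sum: "sum_mset M = 2 * n" and "V \<subseteq> set_mset M"
      and "M \<noteq> {#}" and cnt: "m - 1 \<le> count M s" and "L - s = n"
    by (auto simp: overpartitions_min_count_spread_def overpartitions_min_count_def
        overpartitions_def s_def L_def)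
  then have "s \<in># M" "L \<in># M" by (simp_all add: s_def L_def)
  then have M: "M = add_mset L R" by (simp add: R_def)
  have ge_s: "s \<le> x" if "x \<in># M" for x using that by (simp add: s_def)
  have "L = s + n" using \<open>L - s = n\<close> ge_s[OF \<open>L \<in># M\<close>] by simp
  have "0 < s" using pos \<open>s \<in># M\<close> by blast
  \<comment> \<open>two copies of \<open>L = s + n > n\<close> would already exceed the total \<open>2n\<close>\<close>
  have "L \<notin># R"
  proof
    assume "L \<in># R"
    then have "L \<le> sum_mset R" by (rule mem_le_sum_mset)
    then show False using sum \<open>L = s + n\<close> \<open>0 < s\<close> by (simp add: M)
  qed
  then have set_R: "set_mset R = set_mset M - {L}" unfolding R_def by (rule at_most_one_mset_mset_diff)
  have "s \<noteq> L" using \<open>L = s + n\<close> \<open>1 \<le> n\<close> by simp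
  have lower: "lower_largest (M, V) = ((add_mset s R, V - {L}), L \<in> V)"
    by (simp add: lower_largest_def Let_def s_def L_def R_def)
  have min: "Min_mset (add_mset s R) = s"
    using ge_s by (intro Min_eqI) (auto simp: set_R)
  have "sum_mset (add_mset s R) = n"
    using sum \<open>L = s + n\<close> by (simp add: M)
  moreover have "count (add_mset s R) s = count M s + 1"
    using \<open>s \<noteq> L\<close> by (simp add: M)
  ultimately show "lower_largest (M, V) \<in> overpartitions_min_count m n \<times> UNIV"
    using pos cnt min \<open>V \<subseteq> set_mset M\<close> \<open>0 < s\<close> \<open>2 \<le> m\<close>
    by (auto simp: lower set_R overpartitions_min_count_def overpartitions_def)
  show "raise_smallest n (lower_largest (M, V)) = (M, V)"
    unfolding lower using min \<open>L = s + n\<close> by (auto simp: raise_smallest_def M)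
qed

lemma bij_betw_raise_smallest:
  assumes "1 \<le> n" "2 \<le> m"
  shows "bij_betw (raise_smallest n) (overpartitions_min_count m n \<times> UNIV)
           (overpartitions_min_count_spread (m - 1) (2 * n) n)"
  using raise_smallest_mem_and_inverse[OF assms] lower_largest_mem_and_inverse[OF assms]
  by (intro bij_betw_byWitness[where f' = lower_largest]) (auto simp: image_subset_iff)

theorem theorem5p3:
  fixes n m :: nat
  assumes "1 \<le> n" and "2 \<le> m"
  shows "2 * abar m n = abar2 (m - 1) (2 * n) n"
proof -
  have "abar2 (m - 1) (2 * n) n = card (overpartitions_min_count m n \<times> (UNIV :: bool set))"
    using bij_betw_same_card[OF bij_betw_raise_smallest[OF assms]] by (simp add: abar2_eq_card)
  also have "\<dots> = 2 * abar m n"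
    by (simp add: card_cartesian_product abar_eq_card)
  finally show ?thesis ..
qed

end
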